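(* Let $A$ be a nonempty finite set of $n$ alternatives. A choice rule $C$ on $A$ is (capacity-constrained) lexicographic if and only if it satisfies capacity-filling, gross substitutes, monotonicity, and the capacity-wise weak axiom of revealed preference (CWARP).
   Context: Let $\mathcal{A}$ be the set of all nonempty subsets of $A$. A choice rule is a map $C$ assigning to each $(S,q)\in\mathcal{A}\times\{1,\dots,n\}$ a nonempty set $C(S,q)\subseteq S$ with $|C(S,q)|\le q$; write $R(S,q)=S\setminus C(S,q)$. A priority ordering is a complete, transitive, antisymmetric binary relation on $A$; a priority profile is a list $(\succ_1,\dots,\succ_n)$ of $n$ priority orderings. $C$ is lexicographic for $(\succ_1,\dots,\succ_n)$ if for every $(S,q)$, $C(S,q)$ is obtained by choosing the $\succ_1$-highest alternative in $S$, then the $\succ_2$-highest among the remaining ones, and so on, until $q$ alternatives are chosen or none is left; $C$ is lexicographic if it is lexicographic for some priority profile. Capacity-filling: $|C(S,q)|=\min\{|S|,q\}$ for all $(S,q)$. Gross substitutes: for each $(S,q)$ and $a,b\in S$ with $a\ne b$, $a\in C(S,q)$ implies $a\in C(S\setminus\{b\},q)$. Monotonicity: $C(S,q)\subseteq C(S,q+1)$ for all $S\in\mathcal{A}$, $q\in\{1,\dots,n-1\}$. For $q\in\{2,\dots,n\}$, $a$ is revealed to be preferred to $b$ at $q$ if there is $S\in\mathcal{A}$ with $a,b\notin C(S,q-1)$, $a\in C(S,q)$ and $b\in R(S,q)$. CWARP: for each $q\in\{2,\dots,n\}$ and $a,b\in A$, if $a$ is revealed to be preferred to $b$ at $q$ then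 $b$ is not revealed to be preferred to $a$ at $q$. *)

theory Defs
  imports Main
begin

definition choice_rule :: "'a set \<Rightarrow> ('a set \<Rightarrow> nat \<Rightarrow> 'a set) \<Rightarrow> bool" where
  "choice_rule A C \<longleftrightarrow>
     (\<forall>S q. S \<subseteq> A \<and> S \<noteq> {} \<and> 1 \<le> q \<and> q \<le> card A \<longrightarrow>
        C S q \<noteq> {} \<and> C S q \<subseteq> S \<and> card (C S q) \<le> q)"

text \<open>A priority ordering on A: a complete, transitive, antisymmetric (hence reflexive)
  relation; (a,b) \<in> r means a has priority at least as high as b.\<close>
definition priority_ordering :: "'a set \<Rightarrow> 'a rel \<Rightarrow> bool" where
  "priority_ordering A r \<longleftrightarrow> r \<subseteq> A \<times> A \<and> linear_order_on A r"

definition top_of :: "'a rel \<Rightarrow> 'a set \<Rightarrow> 'a" where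
  "top_of r S = (THE a. a \<in> S \<and> (\<forall>b\<in>S. (a, b) \<in> r))"

fun lex_pick :: "'a rel list \<Rightarrow> 'a set \<Rightarrow> 'a set" where
  "lex_pick [] S = {}"
| "lex_pick (r # rs) S =
     (if S = {} then {} else insert (top_of r S) (lex_pick rs (S - {top_of r S})))"

definition lexicographic_for :: "'a set \<Rightarrow> ('a set \<Rightarrow> nat \<Rightarrow> 'a set) \<Rightarrow> 'a rel list \<Rightarrow> bool" where
  "lexicographic_for A C P \<longleftrightarrow>
     length P = card A \<and> (\<forall>r\<in>set P. priority_ordering A r) \<and>
     (\<forall>S q. S \<subseteq> A \<and> S \<noteq> {} \<and> 1 \<le> q \<and> q \<le> card A \<longrightarrow> C S q = lex_pick (take q P) S)"

definition lexicographic :: "'a set \<Rightarrow> ('a set \<Rightarrow> nat \<Rightarrow> 'a set) \<Rightarrow> bool" where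
  "lexicographic A C \<longleftrightarrow> (\<exists>P. lexicographic_for A C P)"

definition capacity_filling :: "'a set \<Rightarrow> ('a set \<Rightarrow> nat \<Rightarrow> 'a set) \<Rightarrow> bool" where
  "capacity_filling A C \<longleftrightarrow>
     (\<forall>S q. S \<subseteq> A \<and> S \<noteq> {} \<and> 1 \<le> q \<and> q \<le> card A \<longrightarrow> card (C S q) = min (card S) q)"

definition gross_substitutes :: "'a set \<Rightarrow> ('a set \<Rightarrow> nat \<Rightarrow> 'a set) \<Rightarrow> bool" where
  "gross_substitutes A C \<longleftrightarrow>
     (\<forall>S q a b. S \<subseteq> A \<and> S \<noteq> {} \<and> 1 \<le> q \<and> q \<le> card A \<and> a \<in> S \<and> b \<in> S \<and> a \<noteq> b
        \<and> a \<in> C S q \<longrightarrow> a \<in> C (S - {b}) q)"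

definition monotonic :: "'a set \<Rightarrow> ('a set \<Rightarrow> nat \<Rightarrow> 'a set) \<Rightarrow> bool" where
  "monotonic A C \<longleftrightarrow>
     (\<forall>S q. S \<subseteq> A \<and> S \<noteq> {} \<and> 1 \<le> q \<and> q \<le> card A - 1 \<longrightarrow> C S q \<subseteq> C S (q + 1))"

definition revealed_pref :: "'a set \<Rightarrow> ('a set \<Rightarrow> nat \<Rightarrow> 'a set) \<Rightarrow> nat \<Rightarrow> 'a \<Rightarrow> 'a \<Rightarrow> bool" where
  "revealed_pref A C q a b \<longleftrightarrow>
     (\<exists>S. S \<subseteq> A \<and> S \<noteq> {} \<and> a \<notin> C S (q - 1) \<and> b \<notin> C S (q - 1)
          \<and> a \<in> C S q \<and> b \<in> S - C S q)"

definition CWARP :: "'a set \<Rightarrow> ('a set \<Rightarrow> nat \<Rightarrow> 'a set) \<Rightarrow> bool" where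
  "CWARP A C \<longleftrightarrow>
     (\<forall>q a b. 2 \<le> q \<and> q \<le> card A \<and> a \<in> A \<and> b \<in> A \<and> revealed_pref A C q a b
        \<longrightarrow> \<not> revealed_pref A C q b a)"

end

theory Submission
  imports Defs "HOL-Library.Product_Lexorder"
begin

text \<open>Conversely, say that a is revealed preferred to b at capacity q if some S chooses a at q but
  not at q - 1 and rejects b at q. Capacity-filling and monotonicity make raising the capacity
  from q - 1 to q add exactly one element, gross substitutes make choices hereditary to subsets,
  and so CWARP (at q = 1: heredity and capacity-filling) makes this relation asymmetric; a
  three-element argument makes it transitive. Extending it to a linear order for every q gives
  a priority profile, and induction on q shows that C is lexicographic for it: the element added
  at capacity q is revealed preferred to every other remaining alternative, hence the top of the
  q-th ordering.\<close>

lemma priority_orderingD: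
  assumes "priority_ordering A r"
  shows "r \<subseteq> A \<times> A" "refl_on A r" "trans r" "antisym r" "total_on A r"
  using assms
  unfolding priority_ordering_def linear_order_on_def partial_order_on_def preorder_on_def
  by auto

lemma priority_ordering_inv_image:
  fixes k :: "'a \<Rightarrow> 'b::linorder"
  assumes "inj_on k A"
  shows "priority_ordering A {(a, b). a \<in> A \<and> b \<in> A \<and> k a \<le> k b}"
  using assms
  unfolding priority_ordering_def linear_order_on_def partial_order_on_def preorder_on_def
    refl_on_def trans_def antisym_def total_on_def inj_on_def
  by (auto intro: order_trans antisym)

lemma strict_order_extension:
  assumes "finite A"
    and p_irrefl: "\<And>a. a \<in> A \<Longrightarrow> \<not> p a a"
    and p_trans: "\<And>a b c. a \<in> A \<Longrightarrow> b \<in> A \<Longrightarrow> c \<in> A \<Longrightarrow> p a b \<Longrightarrow> p b c \<Longrightarrow> p a c"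
  shows "\<exists>r. priority_ordering A r \<and> (\<forall>a\<in>A. \<forall>b\<in>A. p a b \<longrightarrow> (a, b) \<in> r)"
proof -
  define h where "h a = card {c \<in> A. p c a}" for a
  have h_less: "h a < h b" if "a \<in> A" "b \<in> A" "p a b" for a b
  proof -
    have "{c \<in> A. p c a} \<subset> {c \<in> A. p c b}"
      using that p_irrefl p_trans by blast
    then show ?thesis
      unfolding h_def using \<open>finite A\<close> by (simp add: psubset_card_mono)
  qed
  obtain f :: "'a \<Rightarrow> nat" where "inj_on f A"
    using finite_imp_inj_to_nat_seg[OF \<open>finite A\<close>] by blast
  define k where "k a = (h a, f a)" for a
  have "inj_on k A"
    using \<open>inj_on f A\<close> unfolding k_def inj_on_def by simp
  moreover have "k a \<le> k b" if "a \<in> A" "b \<in> A" "p a b" for a b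
    using h_less[OF that] unfolding k_def by (simp add: less_eq_prod_def)
  ultimately show ?thesis
    using priority_ordering_inv_image by blast
qed

lemma priority_ordering_has_top:
  assumes po: "priority_ordering A r" and "finite S" "S \<noteq> {}" "S \<subseteq> A"
  shows "\<exists>t\<in>S. \<forall>b\<in>S. (t, b) \<in> r"
  using \<open>finite S\<close> \<open>S \<noteq> {}\<close> \<open>S \<subseteq> A\<close>
proof (induction S rule: finite_ne_induct)
  case (singleton x)
  then show ?case using priority_orderingD(2)[OF po] by (auto simp: refl_on_def)
next
  case (insert x F)
  then obtain t where t: "t \<in> F" "\<forall>b\<in>F. (t, b) \<in> r" by auto
  have "x \<in> A" "t \<in> A" "x \<noteq> t" using insert t by auto
  show ?case
  proof (cases "(x, t) \<in> r")
    case True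
    then have "\<forall>b\<in>insert x F. (x, b) \<in> r"
      using t \<open>x \<in> A\<close> priority_orderingD(2,3)[OF po] unfolding refl_on_def trans_def by blast
    then show ?thesis by blast
  next
    case False
    then have "(t, x) \<in> r"
      using priority_orderingD(5)[OF po] \<open>x \<in> A\<close> \<open>t \<in> A\<close> \<open>x \<noteq> t\<close>
      unfolding total_on_def by blast
    then show ?thesis using t by blast
  qed
qed

lemma top_of_eqI:
  assumes "priority_ordering A r" "t \<in> S" "\<forall>b\<in>S. (t, b) \<in> r"
  shows "top_of r S = t"
  unfolding top_of_def
proof (rule the_equality)
  fix a assume "a \<in> S \<and> (\<forall>b\<in>S. (a, b) \<in> r)"
  then show "a = t"
    using assms priority_orderingD(4)[OF assms(1)] unfolding antisym_def by blast
qed (use assms in blast)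

lemma top_of_dominates:
  assumes "priority_ordering A r" "finite S" "S \<noteq> {}" "S \<subseteq> A"
  shows "top_of r S \<in> S" "\<forall>b\<in>S. (top_of r S, b) \<in> r"
proof -
  obtain t where "t \<in> S" "\<forall>b\<in>S. (t, b) \<in> r"
    using priority_ordering_has_top[OF assms] by blast
  with top_of_eqI[OF assms(1)] show "top_of r S \<in> S" "\<forall>b\<in>S. (top_of r S, b) \<in> r"
    by auto
qed

lemma lex_pick_empty [simp]: "lex_pick rs {} = {}"
  by (cases rs) auto

lemma lex_pick_subset:
  assumes "\<forall>r\<in>set rs. priority_ordering A r" "finite S" "S \<subseteq> A"
  shows "lex_pick rs S \<subseteq> S"
  using assms
proof (induction rs arbitrary: S)
  case (Cons r rs)
  show ?case
  proof (cases "S = {}")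
    case False
    then have "top_of r S \<in> S"
      using Cons.prems top_of_dominates(1)[of A r S] by simp
    moreover have "lex_pick rs (S - {top_of r S}) \<subseteq> S - {top_of r S}"
      using Cons.IH[of "S - {top_of r S}"] Cons.prems by auto
    ultimately show ?thesis by auto
  qed simp
qed simp

lemma card_lex_pick:
  assumes "\<forall>r\<in>set rs. priority_ordering A r" "finite S" "S \<subseteq> A"
  shows "card (lex_pick rs S) = min (card S) (length rs)"
  using assms
proof (induction rs arbitrary: S)
  case (Cons r rs)
  show ?case
  proof (cases "S = {}")
    case False
    define t where "t = top_of r S"
    have "t \<in> S"
      using Cons.prems False top_of_dominates(1)[of A r S] by (simp add: t_def)
    have "lex_pick rs (S - {t}) \<subseteq> S - {t}"
      using Cons.prems lex_pick_subset[of rs A "S - {t}"] by auto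
    then have "t \<notin> lex_pick rs (S - {t})" and "finite (lex_pick rs (S - {t}))"
      using \<open>finite S\<close> finite_subset by blast+
    then have "card (lex_pick (r # rs) S) = Suc (card (lex_pick rs (S - {t})))"
      using False by (simp add: t_def)
    also have "\<dots> = Suc (min (card S - 1) (length rs))"
      using Cons.IH[of "S - {t}"] Cons.prems \<open>t \<in> S\<close> by auto
    also have "\<dots> = min (card S) (length (r # rs))"
      using False \<open>finite S\<close> card_gt_0_iff[of S] by (auto simp: min_def)
    finally show ?thesis .
  qed simp
qed simp

lemma lex_pick_append_mono: "lex_pick rs S \<subseteq> lex_pick (rs @ rs') S"
  by (induction rs arbitrary: S) auto

lemma lex_pick_snoc:
  "lex_pick (rs @ [r]) S =
     lex_pick rs S \<union> (if S - lex_pick rs S = {} then {} else {top_of r (S - lex_pick rs S)})"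
proof (induction rs arbitrary: S)
  case (Cons r' rs)
  show ?case
  proof (cases "S = {}")
    case False
    define t where "t = top_of r' S"
    have "S - lex_pick (r' # rs) S = (S - {t}) - lex_pick rs (S - {t})"
      using False by (auto simp: t_def)
    then show ?thesis
      using False Cons.IH[of "S - {t}"] by (simp add: t_def)
  qed simp
qed simp

lemma lex_pick_Diff_singleton:
  assumes "\<forall>r\<in>set rs. priority_ordering A r" "finite S" "S \<subseteq> A"
  shows "lex_pick rs S - {b} \<subseteq> lex_pick rs (S - {b})"
  using assms
proof (induction rs arbitrary: S b)
  case (Cons r rs)
  have po: "priority_ordering A r" and IH: "\<And>S b. finite S \<Longrightarrow> S \<subseteq> A \<Longrightarrow>
      lex_pick rs S - {b} \<subseteq> lex_pick rs (S - {b})"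
    using Cons by auto
  show ?case
  proof (cases "S = {}")
    case False
    define t where "t = top_of r S"
    have t: "t \<in> S" "\<forall>x\<in>S. (t, x) \<in> r"
      using top_of_dominates[OF po Cons.prems(2) False Cons.prems(3)] by (auto simp: t_def)
    have pick: "lex_pick (r # rs) S = insert t (lex_pick rs (S - {t}))"
      using False by (simp add: t_def)
    show ?thesis
    proof (cases "b = t")
      case False
      then have "top_of r (S - {b}) = t"
        using top_of_eqI[OF po] t by simp
      then have "lex_pick (r # rs) (S - {b}) = insert t (lex_pick rs (S - {t} - {b}))"
        using t False by (auto simp: Diff_insert2[symmetric] insert_commute)
      then show ?thesis
        using pick IH[of "S - {t}" b] Cons.prems by auto
    next
      case True
      show ?thesis
      proof (cases "S - {t} = {}")
        case empty: True
        show ?thesis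
          using pick \<open>b = t\<close> by (simp add: empty)
      next
        case False
        define t' where "t' = top_of r (S - {t})"
        have "lex_pick (r # rs) (S - {t}) = insert t' (lex_pick rs (S - {t} - {t'}))"
          using False by (simp add: t'_def)
        then show ?thesis
          using pick True IH[of "S - {t}" t'] Cons.prems by auto
      qed
    qed
  qed simp
qed simp

lemma lexicographic_forD:
  assumes "lexicographic_for A C P" "S \<subseteq> A" "S \<noteq> {}" "1 \<le> q" "q \<le> card A"
  shows "C S q = lex_pick (take q P) S"
  using assms unfolding lexicographic_for_def by blast

lemma lexicographic_for_nth:
  assumes "lexicographic_for A C P" "i < card A"
  shows "priority_ordering A (P ! i)"
  using assms unfolding lexicographic_for_def by auto

lemma lexicographic_for_take:
  assumes "lexicographic_for A C P"
  shows "\<forall>r\<in>set (take q P). priority_ordering A r"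
  using assms unfolding lexicographic_for_def by (auto dest: in_set_takeD)

lemma lexicographic_for_capacity_filling:
  assumes "lexicographic_for A C P" "finite A"
  shows "capacity_filling A C"
  unfolding capacity_filling_def
proof (intro allI impI)
  fix S q assume h: "S \<subseteq> A \<and> S \<noteq> {} \<and> 1 \<le> q \<and> q \<le> card A"
  then have "card (lex_pick (take q P) S) = min (card S) q"
    using assms card_lex_pick[OF lexicographic_for_take[OF assms(1)]]
    unfolding lexicographic_for_def by (simp add: finite_subset)
  then show "card (C S q) = min (card S) q"
    using h lexicographic_forD[OF assms(1)] by simp
qed

lemma lexicographic_for_gross_substitutes:
  assumes "lexicographic_for A C P" "finite A"
  shows "gross_substitutes A C"
  unfolding gross_substitutes_def
proof (intro allI impI)
  fix S q a b
  assume h: "S \<subseteq> A \<and> S \<noteq> {} \<and> 1 \<le> q \<and> q \<le> card A \<and> a \<in> S \<and> b \<in> S \<and> a \<noteq> b \<and> a \<in> C S q"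
  have "a \<in> lex_pick (take q P) S - {b}"
    using h lexicographic_forD[OF assms(1), of S q] by simp
  also have "\<dots> \<subseteq> lex_pick (take q P) (S - {b})"
    using h assms(2) lex_pick_Diff_singleton[OF lexicographic_for_take[OF assms(1)]]
    by (simp add: finite_subset)
  also have "\<dots> = C (S - {b}) q"
    using h lexicographic_forD[OF assms(1), of "S - {b}" q] by auto
  finally show "a \<in> C (S - {b}) q" .
qed

lemma lexicographic_for_monotonic:
  assumes "lexicographic_for A C P"
  shows "monotonic A C"
  unfolding monotonic_def
proof (intro allI impI)
  fix S q assume h: "S \<subseteq> A \<and> S \<noteq> {} \<and> 1 \<le> q \<and> q \<le> card A - 1"
  have "lex_pick (take q P) S \<subseteq> lex_pick (take (q + 1) P) S"
    unfolding take_add by (rule lex_pick_append_mono)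
  moreover have "q + 1 \<le> card A"
    using h by arith
  ultimately show "C S q \<subseteq> C S (q + 1)"
    using h lexicographic_forD[OF assms, of S q] lexicographic_forD[OF assms, of S "q + 1"] by simp
qed

lemma lexicographic_for_revealed_pref:
  assumes lex: "lexicographic_for A C P" and "finite A" "2 \<le> q" "q \<le> card A"
    and "revealed_pref A C q a b"
  shows "(a, b) \<in> P ! (q - 1)"
proof -
  obtain S where S: "S \<subseteq> A" "S \<noteq> {}" "a \<notin> C S (q - 1)" "b \<notin> C S (q - 1)"
    "a \<in> C S q" "b \<in> S - C S q"
    using assms(5) unfolding revealed_pref_def by blast
  define r where "r = P ! (q - 1)"
  define L where "L = C S (q - 1)"
  have po: "priority_ordering A r"
    using lexicographic_for_nth[OF lex] assms(3,4) by (simp add: r_def)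
  have "take q P = take (q - 1) P @ [r]"
    using take_Suc_conv_app_nth[of "q - 1" P] lex assms(3,4)
    by (simp add: r_def lexicographic_for_def)
  then have "C S q = lex_pick (take (q - 1) P @ [r]) S"
    using lexicographic_forD[OF lex S(1,2), of q] assms(3,4) by simp
  also have "\<dots> = L \<union> (if S - L = {} then {} else {top_of r (S - L)})"
    using lexicographic_forD[OF lex S(1,2), of "q - 1"] assms(3,4)
    unfolding L_def lex_pick_snoc by simp
  finally have "C S q = L \<union> (if S - L = {} then {} else {top_of r (S - L)})" .
  then have "S - L \<noteq> {}" "a = top_of r (S - L)"
    using S(3,5) unfolding L_def by (auto split: if_splits)
  moreover have "b \<in> S - L"
    using S(4,6) unfolding L_def by blast
  moreover have "finite (S - L)"
    using S(1) \<open>finite A\<close> finite_subset by blast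
  ultimately show ?thesis
    using top_of_dominates(2)[OF po] S(1) unfolding r_def by blast
qed

lemma lexicographic_for_CWARP:
  assumes "lexicographic_for A C P" "finite A"
  shows "CWARP A C"
  unfolding CWARP_def
proof (intro allI impI notI)
  fix q a b
  assume h: "2 \<le> q \<and> q \<le> card A \<and> a \<in> A \<and> b \<in> A \<and> revealed_pref A C q a b"
    and "revealed_pref A C q b a"
  then have "(a, b) \<in> P ! (q - 1)" "(b, a) \<in> P ! (q - 1)"
    using lexicographic_for_revealed_pref[OF assms] by blast+
  moreover have "antisym (P ! (q - 1))"
    using priority_orderingD(4)[OF lexicographic_for_nth[OF assms(1), of "q - 1"]] h by fastforce
  moreover have "a \<noteq> b"
    using h unfolding revealed_pref_def by blast
  ultimately show False
    unfolding antisym_def by blast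
qed

locale choice_axioms =
  fixes A :: "'a set" and C :: "'a set \<Rightarrow> nat \<Rightarrow> 'a set"
  assumes finite_A: "finite A" and choice_rule: "choice_rule A C"
    and capacity_filling: "capacity_filling A C" and gross_substitutes: "gross_substitutes A C"
    and monotonic: "monotonic A C" and CWARP: "CWARP A C"
begin

abbreviation n :: nat where "n \<equiv> card A"

lemma C_subset: "S \<subseteq> A \<Longrightarrow> S \<noteq> {} \<Longrightarrow> 1 \<le> q \<Longrightarrow> q \<le> n \<Longrightarrow> C S q \<subseteq> S"
  using choice_rule unfolding choice_rule_def by blast

lemma card_C: "S \<subseteq> A \<Longrightarrow> S \<noteq> {} \<Longrightarrow> 1 \<le> q \<Longrightarrow> q \<le> n \<Longrightarrow> card (C S q) = min (card S) q"
  using capacity_filling unfolding capacity_filling_def by blast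

lemma C_mono: "S \<subseteq> A \<Longrightarrow> S \<noteq> {} \<Longrightarrow> 1 \<le> q \<Longrightarrow> q < n \<Longrightarrow> C S q \<subseteq> C S (Suc q)"
  using monotonic unfolding monotonic_def by auto

lemma C_hereditary:
  assumes q: "1 \<le> q" "q \<le> n" and "S \<subseteq> A" "S' \<subseteq> S" "x \<in> S'" "x \<in> C S q"
  shows "x \<in> C S' q"
proof -
  have "x \<in> C (S' \<union> F) q \<Longrightarrow> x \<in> C S' q" if "finite F" "S' \<union> F \<subseteq> A" for F
    using that
  proof (induction F rule: finite_induct)
    case (insert y F)
    show ?case
    proof (cases "y \<in> S'")
      case True
      then have "S' \<union> insert y F = S' \<union> F" by blast
      then show ?thesis using insert by simp
    next
      case False
      then have "x \<noteq> y" and "S' \<union> insert y F - {y} = S' \<union> F"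
        using \<open>x \<in> S'\<close> \<open>y \<notin> F\<close> by auto
      then have "x \<in> C (S' \<union> F) q"
        using gross_substitutes insert.prems q \<open>x \<in> S'\<close>
        unfolding gross_substitutes_def by (metis UnCI insertI1 empty_iff)
      then show ?thesis using insert by simp
    qed
  qed simp
  moreover have "S' \<union> (S - S') = S"
    using \<open>S' \<subseteq> S\<close> by blast
  ultimately show ?thesis
    using assms finite_subset[OF _ finite_A] by (metis Diff_subset finite_Diff)
qed

text \<open>The convention C(S, 0) = {} lets C(S, q - 1) make sense for q = 1.\<close>
definition Cext :: "'a set \<Rightarrow> nat \<Rightarrow> 'a set" where
  "Cext S k = (if k = 0 then {} else C S k)"

lemma Cext_subset: "S \<subseteq> A \<Longrightarrow> S \<noteq> {} \<Longrightarrow> k \<le> n \<Longrightarrow> Cext S k \<subseteq> S"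
  unfolding Cext_def using C_subset by auto

lemma card_Cext: "S \<subseteq> A \<Longrightarrow> S \<noteq> {} \<Longrightarrow> k \<le> n \<Longrightarrow> card (Cext S k) = min (card S) k"
  unfolding Cext_def using card_C by auto

lemma Cext_hereditary:
  "k \<le> n \<Longrightarrow> S \<subseteq> A \<Longrightarrow> S' \<subseteq> S \<Longrightarrow> x \<in> S' \<Longrightarrow> x \<in> Cext S k \<Longrightarrow> x \<in> Cext S' k"
  unfolding Cext_def using C_hereditary by (auto split: if_splits)

lemma Cext_subset_C: "S \<subseteq> A \<Longrightarrow> S \<noteq> {} \<Longrightarrow> 1 \<le> q \<Longrightarrow> q \<le> n \<Longrightarrow> Cext S (q - 1) \<subseteq> C S q"
  unfolding Cext_def using C_mono[of S "q - 1"] by auto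

lemma Cext_eq_self: "S \<subseteq> A \<Longrightarrow> S \<noteq> {} \<Longrightarrow> k \<le> n \<Longrightarrow> card S \<le> k \<Longrightarrow> Cext S k = S"
  using Cext_subset card_Cext finite_subset[OF _ finite_A] by (metis card_subset_eq min_absorb1)

lemma Cext_restrict:
  assumes "k \<le> n" "T \<subseteq> A" "Cext T k \<subseteq> S" "S \<subseteq> T" "S \<noteq> {}" "k \<le> card S"
  shows "Cext S k = Cext T k"
proof -
  have "S \<subseteq> A" "T \<noteq> {}" "finite T"
    using assms finite_subset[OF _ finite_A] by auto
  have "card S \<le> card T"
    using card_mono[OF \<open>finite T\<close> \<open>S \<subseteq> T\<close>] .
  then have "card (Cext T k) = k" "card (Cext S k) = k"
    using card_Cext[OF \<open>T \<subseteq> A\<close> \<open>T \<noteq> {}\<close> \<open>k \<le> n\<close>]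
      card_Cext[OF \<open>S \<subseteq> A\<close> \<open>S \<noteq> {}\<close> \<open>k \<le> n\<close>] \<open>k \<le> card S\<close> by simp_all
  moreover have "Cext T k \<subseteq> Cext S k"
    using Cext_hereditary[OF \<open>k \<le> n\<close> \<open>T \<subseteq> A\<close> \<open>S \<subseteq> T\<close>] \<open>Cext T k \<subseteq> S\<close> by blast
  moreover have "finite (Cext S k)"
    using Cext_subset[OF \<open>S \<subseteq> A\<close> \<open>S \<noteq> {}\<close> \<open>k \<le> n\<close>] \<open>S \<subseteq> T\<close> \<open>finite T\<close>
    by (meson finite_subset)
  ultimately show ?thesis
    using card_subset_eq by metis
qed

lemma C_eq_insert_Cext:
  assumes "1 \<le> q" "q \<le> n" "S \<subseteq> A" "q \<le> card S"
  obtains x where "x \<in> S - Cext S (q - 1)" "C S q = insert x (Cext S (q - 1))"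
proof -
  have "S \<noteq> {}" "finite S"
    using assms finite_subset[OF _ finite_A] by auto
  then have sub: "Cext S (q - 1) \<subseteq> C S q" "C S q \<subseteq> S"
    and "card (Cext S (q - 1)) = q - 1" "card (C S q) = q"
    using assms Cext_subset_C C_subset card_Cext card_C by auto
  then have "card (C S q - Cext S (q - 1)) = 1"
    using \<open>finite S\<close> assms(1) by (simp add: card_Diff_subset finite_subset)
  then obtain x where "C S q - Cext S (q - 1) = {x}"
    by (rule card_1_singletonE)
  then show ?thesis
    using that sub by blast
qed

definition reveals :: "nat \<Rightarrow> 'a \<Rightarrow> 'a \<Rightarrow> bool" where
  "reveals q a b \<longleftrightarrow> (\<exists>S\<subseteq>A. a \<in> C S q - Cext S (q - 1) \<and> b \<in> S - C S q)"

lemma revealsI: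
  "S \<subseteq> A \<Longrightarrow> a \<in> C S q \<Longrightarrow> a \<notin> Cext S (q - 1) \<Longrightarrow> b \<in> S \<Longrightarrow> b \<notin> C S q \<Longrightarrow> reveals q a b"
  unfolding reveals_def by blast

lemma reveals_mem:
  assumes "reveals q a b" "1 \<le> q" "q \<le> n"
  shows "a \<in> A" "b \<in> A" "a \<noteq> b"
  using assms C_subset unfolding reveals_def by blast+

lemma reveals_revealed_pref:
  assumes "reveals q a b" "2 \<le> q" "q \<le> n"
  shows "revealed_pref A C q a b"
proof -
  obtain S where S: "S \<subseteq> A" "a \<in> C S q" "a \<notin> Cext S (q - 1)" "b \<in> S" "b \<notin> C S q"
    using assms(1) unfolding reveals_def by blast
  have "Cext S (q - 1) = C S (q - 1)"
    using assms(2) by (simp add: Cext_def)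
  moreover have "Cext S (q - 1) \<subseteq> C S q"
    using Cext_subset_C[of S q] S assms(2,3) by auto
  ultimately show ?thesis
    unfolding revealed_pref_def using S by blast
qed

lemma reveals_asym:
  assumes "reveals q a b" "1 \<le> q" "q \<le> n"
  shows "\<not> reveals q b a"
proof
  assume "reveals q b a"
  show False
  proof (cases "q = 1")
    case True
    \<comment> \<open>CWARP is silent here; instead a and b would both be chosen from {a, b} at capacity 1.\<close>
    obtain S1 where S1: "S1 \<subseteq> A" "a \<in> C S1 q" "b \<in> S1"
      using assms(1) unfolding reveals_def by blast
    obtain S2 where S2: "S2 \<subseteq> A" "b \<in> C S2 q" "a \<in> S2"
      using \<open>reveals q b a\<close> unfolding reveals_def by blast
    have "a \<in> S1" "b \<in> S2"
      using S1 S2 C_subset assms(2,3) by blast+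
    moreover have "{a, b} \<subseteq> A"
      using S1 \<open>a \<in> S1\<close> by blast
    moreover have "a \<in> C {a, b} q"
      by (rule C_hereditary[OF assms(2,3) S1(1)]) (use S1 \<open>a \<in> S1\<close> in auto)
    moreover have "b \<in> C {a, b} q"
      by (rule C_hereditary[OF assms(2,3) S2(1)]) (use S2 \<open>b \<in> S2\<close> in auto)
    ultimately have "C {a, b} q = {a, b}"
      using C_subset[of "{a, b}" q] assms(2,3) by blast
    moreover have "card (C {a, b} q) \<le> 1"
      using card_C[of "{a, b}" q] True assms(3) \<open>{a, b} \<subseteq> A\<close> by simp
    ultimately show False
      using reveals_mem[OF assms] by simp
  next
    case False
    then have "2 \<le> q"
      using assms(2) by simp
    then have "revealed_pref A C q a b" "revealed_pref A C q b a"
      using reveals_revealed_pref assms(1,3) \<open>reveals q b a\<close> by blast+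
    then show False
      using CWARP \<open>2 \<le> q\<close> assms(3) reveals_mem[OF assms] unfolding CWARP_def by blast
  qed
qed

text \<open>Adding Y to what T chooses at capacity q - 1 does not change that choice, so raising the
  capacity to q adds exactly one element of Y.\<close>
lemma exists_revealed_over_rest:
  assumes q: "1 \<le> q" "q \<le> n" and "T \<subseteq> A" "Y \<subseteq> T - Cext T (q - 1)" "Y \<noteq> {}"
  obtains x where "x \<in> Y" "\<And>y. y \<in> Y \<Longrightarrow> y \<noteq> x \<Longrightarrow> reveals q x y"
proof -
  define K where "K = Cext T (q - 1)"
  have "q - 1 \<le> n" "T \<noteq> {}" "finite T"
    using assms finite_subset[OF _ finite_A] by auto
  have "q - 1 < card T"
  proof (rule ccontr)
    assume "\<not> q - 1 < card T"
    then have "K = T"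
      using Cext_eq_self[OF \<open>T \<subseteq> A\<close> \<open>T \<noteq> {}\<close> \<open>q - 1 \<le> n\<close>] by (simp add: K_def)
    then show False
      using assms(4,5) by (auto simp: K_def)
  qed
  then have "card K = q - 1"
    using card_Cext[OF \<open>T \<subseteq> A\<close> \<open>T \<noteq> {}\<close> \<open>q - 1 \<le> n\<close>] by (simp add: K_def)
  define S where "S = K \<union> Y"
  have "K \<subseteq> T" "K \<inter> Y = {}"
    using Cext_subset[OF \<open>T \<subseteq> A\<close> \<open>T \<noteq> {}\<close> \<open>q - 1 \<le> n\<close>] assms(4) by (auto simp: K_def)
  have "finite Y" "finite K"
    using assms(4) \<open>K \<subseteq> T\<close> \<open>finite T\<close> by (meson Diff_subset finite_subset subset_trans)+
  have "S \<subseteq> T" "S \<subseteq> A" "S \<noteq> {}"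
    using \<open>K \<subseteq> T\<close> assms(3,4,5) by (auto simp: S_def)
  have card_S: "card S = q - 1 + card Y"
    using card_Un_disjoint[OF \<open>finite K\<close> \<open>finite Y\<close> \<open>K \<inter> Y = {}\<close>] \<open>card K = q - 1\<close>
    by (simp add: S_def)
  have "Cext S (q - 1) = K"
    using Cext_restrict[OF \<open>q - 1 \<le> n\<close> \<open>T \<subseteq> A\<close> _ \<open>S \<subseteq> T\<close> \<open>S \<noteq> {}\<close>] card_S
    by (simp add: K_def S_def)
  moreover have "q \<le> card S"
    using card_S card_gt_0_iff[of Y] assms(5) \<open>finite Y\<close> q(1) by linarith
  ultimately obtain x where x: "x \<in> S - K" "C S q = insert x K"
    using C_eq_insert_Cext[OF q \<open>S \<subseteq> A\<close>] by metis
  have "reveals q x y" if "y \<in> Y" "y \<noteq> x" for y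
    by (rule revealsI[of S]) (use x that \<open>S \<subseteq> A\<close> \<open>Cext S (q - 1) = K\<close> \<open>K \<inter> Y = {}\<close> in
      \<open>auto simp: S_def\<close>)
  moreover have "x \<in> Y"
    using x(1) by (auto simp: S_def)
  ultimately show ?thesis
    using that by blast
qed

lemma reveals_trans:
  assumes ab: "reveals q a b" and bc: "reveals q b c" and q: "1 \<le> q" "q \<le> n"
  shows "reveals q a c"
proof -
  obtain S1 where S1: "S1 \<subseteq> A" "a \<in> C S1 q" "a \<notin> Cext S1 (q - 1)" "b \<in> S1" "b \<notin> C S1 q"
    using ab unfolding reveals_def by blast
  obtain S2 where S2: "S2 \<subseteq> A" "b \<in> C S2 q" "b \<notin> Cext S2 (q - 1)" "c \<in> S2" "c \<notin> C S2 q"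
    using bc unfolding reveals_def by blast
  define T where "T = S1 \<union> S2"
  have "T \<subseteq> A"
    using S1 S2 by (simp add: T_def)
  have "q - 1 \<le> n"
    using q by simp
  have outside: "x \<notin> Cext T (q - 1)" if "S' \<subseteq> T" "x \<in> S'" "x \<notin> Cext S' (q - 1)" for S' x
    using Cext_hereditary[OF \<open>q - 1 \<le> n\<close> \<open>T \<subseteq> A\<close>] that by blast
  have "Cext S1 (q - 1) \<subseteq> C S1 q" "Cext S2 (q - 1) \<subseteq> C S2 q" "a \<in> S1"
    using Cext_subset_C C_subset S1 S2 q by blast+
  then have "{a, b, c} \<subseteq> T - Cext T (q - 1)"
    using outside[of S1 a] outside[of S1 b] outside[of S2 c] S1 S2 by (auto simp: T_def)
  then obtain x where x: "x \<in> {a, b, c}" "\<And>y. y \<in> {a, b, c} \<Longrightarrow> y \<noteq> x \<Longrightarrow> reveals q x y"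
    using exists_revealed_over_rest[OF q \<open>T \<subseteq> A\<close>] by blast
  consider "x = a" | "x = b" | "x = c"
    using x(1) by blast
  then show ?thesis
  proof cases
    case 1
    then show ?thesis
      using x(2)[of c] reveals_asym[OF ab q] bc by auto
  next
    case 2
    then show ?thesis
      using x(2)[of a] reveals_asym[OF ab q] reveals_mem[OF ab q] by auto
  next
    case 3
    then show ?thesis
      using x(2)[of b] reveals_asym[OF bc q] reveals_mem[OF bc q] by auto
  qed
qed

lemma reveals_extension:
  assumes "1 \<le> q" "q \<le> n"
  shows "\<exists>r. priority_ordering A r \<and> (\<forall>a b. reveals q a b \<longrightarrow> (a, b) \<in> r)"
proof -
  have "\<exists>r. priority_ordering A r \<and> (\<forall>a\<in>A. \<forall>b\<in>A. reveals q a b \<longrightarrow> (a, b) \<in> r)"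
    by (rule strict_order_extension[OF finite_A])
      (use reveals_mem reveals_trans assms in blast)+
  then show ?thesis
    using reveals_mem assms by blast
qed

lemma lex_pick_take_eq_Cext:
  assumes "length P = n"
    and P: "\<And>i. i < n \<Longrightarrow> priority_ordering A (P ! i) \<and> (\<forall>a b. reveals (Suc i) a b \<longrightarrow> (a, b) \<in> P ! i)"
    and "q \<le> n" "S \<subseteq> A" "S \<noteq> {}"
  shows "lex_pick (take q P) S = Cext S q"
  using \<open>q \<le> n\<close>
proof (induction q)
  case 0
  then show ?case by (simp add: Cext_def)
next
  case (Suc q)
  have po: "priority_ordering A (P ! q)" and ext: "\<And>a b. reveals (Suc q) a b \<Longrightarrow> (a, b) \<in> P ! q"
    using P Suc.prems by auto
  have pick: "lex_pick (take (Suc q) P) S =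
      Cext S q \<union> (if S - Cext S q = {} then {} else {top_of (P ! q) (S - Cext S q)})"
    using take_Suc_conv_app_nth[of q P] Suc assms(1) by (simp add: lex_pick_snoc)
  show ?case
  proof (cases "Suc q \<le> card S")
    case False
    then have "Cext S q = S" "Cext S (Suc q) = S"
      using Cext_eq_self assms(4,5) Suc.prems by auto
    then show ?thesis
      using pick by simp
  next
    case True
    then obtain x where x: "x \<in> S - Cext S q" "C S (Suc q) = insert x (Cext S q)"
      using C_eq_insert_Cext[of "Suc q" S] Suc.prems assms(4) by auto
    have "(x, y) \<in> P ! q" if "y \<in> S - Cext S q" for y
    proof (cases "y = x")
      case True
      then show ?thesis
        using priority_orderingD(2)[OF po] x(1) assms(4) unfolding refl_on_def by blast
    next
      case False
      then have "reveals (Suc q) x y"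
        using x that assms(4) by (intro revealsI[of S]) auto
      then show ?thesis
        using ext by blast
    qed
    then have "top_of (P ! q) (S - Cext S q) = x"
      using top_of_eqI[OF po] x(1) by blast
    then show ?thesis
      using pick x by (auto simp: Cext_def)
  qed
qed

theorem lexicographic: "lexicographic A C"
proof -
  have "\<forall>q. \<exists>r. 1 \<le> q \<and> q \<le> n \<longrightarrow> priority_ordering A r \<and> (\<forall>a b. reveals q a b \<longrightarrow> (a, b) \<in> r)"
    using reveals_extension by blast
  then obtain R where R: "\<And>q. 1 \<le> q \<Longrightarrow> q \<le> n \<Longrightarrow>
      priority_ordering A (R q) \<and> (\<forall>a b. reveals q a b \<longrightarrow> (a, b) \<in> R q)"
    by metis
  define P where "P = map (\<lambda>i. R (Suc i)) [0..<n]"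
  have "length P = n"
    by (simp add: P_def)
  moreover have "\<And>i. i < n \<Longrightarrow> priority_ordering A (P ! i) \<and> (\<forall>a b. reveals (Suc i) a b \<longrightarrow> (a, b) \<in> P ! i)"
    using R by (simp add: P_def)
  ultimately have "lexicographic_for A C P"
    unfolding lexicographic_for_def
    using lex_pick_take_eq_Cext by (auto simp: in_set_conv_nth Cext_def)
  then show ?thesis
    unfolding lexicographic_def by blast
qed

end

theorem corollary1:
  fixes A :: "'a set" and C :: "'a set \<Rightarrow> nat \<Rightarrow> 'a set"
  assumes "finite A" and "A \<noteq> {}" and "choice_rule A C"
  shows "lexicographic A C \<longleftrightarrow>
           capacity_filling A C \<and> gross_substitutes A C \<and> monotonic A C \<and> CWARP A C"
proof
  assume "lexicographic A C"
  then obtain P where "lexicographic_for A C P"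
    unfolding lexicographic_def by blast
  with \<open>finite A\<close> show "capacity_filling A C \<and> gross_substitutes A C \<and> monotonic A C \<and> CWARP A C"
    using lexicographic_for_capacity_filling lexicographic_for_gross_substitutes
      lexicographic_for_monotonic lexicographic_for_CWARP by blast
next
  assume "capacity_filling A C \<and> gross_substitutes A C \<and> monotonic A C \<and> CWARP A C"
  then interpret choice_axioms A C
    using assms by unfold_locales auto
  show "lexicographic A C"
    by (rule lexicographic)
qed

end
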